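(* Let $C\subseteq H$ be nonempty, closed and convex, take $B=N_C$ in Algorithm 3.1, and suppose Assumption 3.1 holds, with $p_n\ge0$, $\mu_n\ge 0$ and $\sum_n p_n<\infty$. Let $\{w_n\},\{y_n\}$ be generated by Algorithm 3.1. If $\lim_{n\to\infty}\|w_n-y_n\|=0$ and $\{w_n\}$ converges weakly to some $z\in H$, then $z\in S$.
   Context: Let $H$ be a real Hilbert space, $A:H\to H$ a single-valued mapping and $B:H\to 2^H$ a set-valued mapping, and let $\Omega:=(A+B)^{-1}(0)=\{x\in H:\ 0\in Ax+Bx\}$. Algorithm 3.1 is the following iteration. Fix $x_0,x_1\in H$, $\mu\in(0,1)$, $\lambda_1>0$, real sequences $\{\alpha_n\},\{\beta_n\},\{\theta_n\}$ and nonnegative real sequences $\{\mu_n\},\{p_n\}$. For $n=1,2,\dots$ compute $w_n=x_n+\alpha_n(x_n-x_{n-1})$, $z_n=x_n+\beta_n(x_n-x_{n-1})$, $y_n=(I+\lambda_nB)^{-1}(I-\lambda_nA)w_n$, and set $\lambda_{n+1}=\min\{(\mu_n+\mu)\|w_n-y_n\|/\|Aw_n-Ay_n\|,\ \lambda_n+p_n\}$ if $Aw_n\neq Ay_n$, and $\lambda_{n+1}=\lambda_n+p_n$ otherwise. If $w_n=y_n$ the algorithm stops (then $y_n\in\Omega$). Otherwise set $x_{n+1}=(1-\theta_n)z_n+\theta_n\big(y_n-\lambda_n(Ay_n-Aw_n)\big)$ and continue. Here $I$ is the identity and $(I+\lambda B)^{-1}$ is the resolvent of $B$. Throughout, it is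 assumed that the algorithm does not stop, so that infinite sequences $\{x_n\},\{w_n\},\{z_n\},\{y_n\},\{\lambda_n\}$ are generated. $N_C(x)=\{z\in H:\langle z,y-x\rangle\le0\ \forall y\in C\}$ for $x\in C$ and $N_C(x)=\emptyset$ otherwise is the normal cone; $P_C$ is the metric projection onto $C$, and $(I+\lambda N_C)^{-1}=P_C$. $S$ denotes the solution set of the variational inequality VI$(A,C)$: find $x^*\in C$ with $\langle Ax^*,y-x^*\rangle\ge0$ for all $y\in C$. Assumption 3.1: (i) $S\neq\emptyset$; (ii) $A$ is pseudomonotone (i.e. $\langle Ax,y-x\rangle\ge0$ implies $\langle Ay,y-x\rangle\ge0$) and Lipschitz continuous on $H$, and whenever $x_n\rightharpoonup w^*$ weakly in $H$, one has $\|Aw^*\|\le\liminf_{n\to\infty}\|Ax_n\|$. *)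

theory Defs
  imports "HOL-Analysis.Analysis"
begin

definition weakly_converges :: "(nat \<Rightarrow> 'a::real_inner) \<Rightarrow> 'a \<Rightarrow> bool" where
  "weakly_converges x z \<longleftrightarrow> (\<forall>v. ((\<lambda>n. inner (x n) v) \<longlonglongrightarrow> inner z v))"

definition pseudomonotone :: "('a::real_inner \<Rightarrow> 'a) \<Rightarrow> bool" where
  "pseudomonotone A \<longleftrightarrow>
     (\<forall>x y. inner (A x) (y - x) \<ge> 0 \<longrightarrow> inner (A y) (y - x) \<ge> 0)"

definition VI_sol :: "('a::real_inner \<Rightarrow> 'a) \<Rightarrow> 'a set \<Rightarrow> 'a set" where
  "VI_sol A C = {x \<in> C. \<forall>y\<in>C. inner (A x) (y - x) \<ge> 0}"

text \<open>Metric projection onto C (the resolvent of the normal cone N_C).\<close>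
definition proj :: "'a::real_inner set \<Rightarrow> 'a \<Rightarrow> 'a" where
  "proj C x = (THE a. a \<in> C \<and> (\<forall>b\<in>C. dist x a \<le> dist x b))"

end

theory Submission
  imports Defs
begin

text \<open>
  The step sizes never drop below \<open>min \<lambda>\<^sub>1 (\<mu> / (L + 1))\<close>, because \<open>A\<close> is \<open>L\<close>-Lipschitz. Hence the
  projection inequality defining \<open>y\<^sub>n\<close>, together with \<open>w\<^sub>n - y\<^sub>n \<rightarrow> 0\<close> and the boundedness of the
  weakly convergent sequence \<open>w\<^sub>n\<close>, gives \<open>liminf \<langle>A w\<^sub>n, x - w\<^sub>n\<rangle> \<ge> 0\<close> for every \<open>x \<in> C\<close>. Since
  \<open>y\<^sub>n \<in> C\<close> also converges weakly to \<open>z\<close> and \<open>C\<close> is closed and convex, \<open>z \<in> C\<close>.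
  If \<open>A z \<noteq> 0\<close>, weak lower semicontinuity keeps \<open>\<parallel>A w\<^sub>n\<parallel>\<close> away from \<open>0\<close>; shifting \<open>x\<close> a little
  along \<open>A w\<^sub>n\<close> lets pseudomonotonicity act, and in the limit this yields Minty's inequality
  \<open>\<langle>A x, x - z\<rangle> \<ge> 0\<close> on \<open>C\<close>. By continuity and convexity Minty's inequality gives \<open>z \<in> S\<close>.
\<close>

lemma nearest_point_inner_le:
  fixes C :: "'a::real_inner set"
  assumes "convex C" and "a \<in> C" and "c \<in> C"
    and nearest: "\<forall>b\<in>C. dist u a \<le> dist u b"
  shows "inner (u - a) (c - a) \<le> 0"
proof (rule ccontr)
  define g where "g = inner (u - a) (c - a)"
  define q where "q = inner (c - a) (c - a)"
  assume "\<not> ?thesis"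
  then have g_pos: "0 < g" by (simp add: g_def)
  have q_nonneg: "0 \<le> q" by (simp add: q_def)
  define t where "t = min 1 (g / (q + 1))"
  have t: "0 < t" "t \<le> 1" using g_pos q_nonneg by (auto simp: t_def)
  have "(1 - t) *\<^sub>R a + t *\<^sub>R c \<in> C"
    using assms t by (simp add: convex_def)
  then have "norm (u - a) \<le> norm ((u - a) - t *\<^sub>R (c - a))"
    using nearest by (force simp: dist_norm algebra_simps)
  then have "inner (u - a) (u - a) \<le> inner (u - a) (u - a) - 2 * t * g + t * t * q"
    by (simp add: norm_eq_sqrt_inner g_def q_def algebra_simps inner_commute)
  then have "2 * g \<le> t * q" using t by (simp add: algebra_simps)
  moreover have "t * q \<le> g / (q + 1) * q"
    unfolding t_def by (rule mult_right_mono[OF min.cobounded2 q_nonneg])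
  moreover have "g / (q + 1) * q < g" using q_nonneg g_pos by (simp add: field_simps)
  ultimately show False using g_pos by linarith
qed

text \<open>Parallelogram law at the midpoint of \<open>c1\<close> and \<open>c2\<close>, which lies in \<open>C\<close>.\<close>

lemma norm_diff_sq_le_infdist:
  fixes C :: "'a::real_inner set"
  assumes "convex C" and "c1 \<in> C" and "c2 \<in> C"
  shows "(norm (c1 - c2))^2 \<le> 2 * (dist u c1)^2 + 2 * (dist u c2)^2 - 4 * (infdist u C)^2"
proof -
  define m where "m = (1/2) *\<^sub>R c1 + (1/2) *\<^sub>R c2"
  have "m \<in> C" using assms by (simp add: m_def convex_def)
  then have "infdist u C \<le> dist u m" by (rule infdist_le)
  then have "(infdist u C)^2 \<le> (dist u m)^2" by (simp add: infdist_nonneg power_mono)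
  moreover have "(norm (c1 - c2))^2 = 2 * (norm (u - c1))^2 + 2 * (norm (u - c2))^2 - 4 * (norm (u - m))^2"
    unfolding m_def by (simp add: power2_norm_eq_inner algebra_simps inner_commute)
  ultimately show ?thesis by (simp add: dist_norm)
qed

lemma Cauchy_if_dist_le_add:
  fixes c :: "nat \<Rightarrow> 'a::metric_space"
  assumes "\<And>m n. dist (c m) (c n) \<le> e m + e n" and "e \<longlonglongrightarrow> 0"
  shows "Cauchy c"
proof (rule metric_CauchyI)
  fix r :: real assume "0 < r"
  then obtain N where "\<forall>n\<ge>N. e n < r / 2"
    using order_tendstoD(2)[OF assms(2), of "r / 2"] by (auto simp: eventually_sequentially)
  then show "\<exists>N. \<forall>m\<ge>N. \<forall>n\<ge>N. dist (c m) (c n) < r"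
    using assms(1) by (smt (verit) field_sum_of_halves)
qed

lemma nearest_point_exists:
  fixes C :: "'a::{real_inner,complete_space} set"
  assumes "C \<noteq> {}" and "closed C" and "convex C"
  shows "\<exists>a\<in>C. \<forall>b\<in>C. dist u a \<le> dist u b"
proof -
  define d where "d = infdist u C"
  define e where "e n = inverse (real (Suc n))" for n
  have d_le: "d \<le> dist u b" if "b \<in> C" for b using that by (simp add: d_def infdist_le)
  have "\<exists>c\<in>C. dist u c < sqrt (d^2 + e n)" for n
  proof -
    have "d < sqrt (d^2 + e n)" by (simp add: e_def real_less_rsqrt)
    moreover have "bdd_below (dist u ` C)" by (rule bdd_belowI[of _ 0]) auto
    ultimately show ?thesis
      using cINF_less_iff[OF assms(1)] unfolding d_def infdist_notempty[OF assms(1)] by blast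
  qed
  then obtain c where c: "\<And>n. c n \<in> C" and c_near: "\<And>n. dist u (c n) < sqrt (d^2 + e n)"
    by metis
  have c_near_sq: "(dist u (c n))^2 \<le> d^2 + e n" for n
    using power_strict_mono[OF c_near[of n] zero_le_dist, of 2] by (simp add: e_def)
  have e_lim: "e \<longlonglongrightarrow> 0" unfolding e_def by (rule LIMSEQ_inverse_real_of_nat)
  have "dist (c m) (c n) \<le> sqrt (2 * e m) + sqrt (2 * e n)" for m n
  proof -
    have "(dist (c m) (c n))^2 \<le> 2 * e m + 2 * e n"
      using norm_diff_sq_le_infdist[OF assms(3) c c, of m n u] c_near_sq[of m] c_near_sq[of n]
      by (simp add: dist_norm d_def)
    then have "dist (c m) (c n) \<le> sqrt (2 * e m + 2 * e n)" by (rule real_le_rsqrt)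
    also have "\<dots> \<le> sqrt (2 * e m) + sqrt (2 * e n)" by (rule sqrt_add_le_add_sqrt) (simp_all add: e_def)
    finally show ?thesis .
  qed
  moreover have "(\<lambda>n. sqrt (2 * e n)) \<longlonglongrightarrow> sqrt (2 * 0)" by (intro tendsto_intros e_lim)
  ultimately have "Cauchy c" using Cauchy_if_dist_le_add[of c "\<lambda>n. sqrt (2 * e n)"] by simp
  then obtain a where a: "c \<longlonglongrightarrow> a" using Cauchy_convergent_iff convergent_def by blast
  have "(\<lambda>n. (dist u (c n))^2) \<longlonglongrightarrow> (dist u a)^2" by (intro tendsto_intros a)
  moreover have "(\<lambda>n. d^2 + e n) \<longlonglongrightarrow> d^2 + 0" by (intro tendsto_intros e_lim)
  ultimately have "(dist u a)^2 \<le> d^2 + 0" by (rule LIMSEQ_le) (use c_near_sq in auto)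
  then have "dist u a \<le> d" using power2_le_imp_le by (simp add: d_def infdist_nonneg)
  moreover have "a \<in> C" using assms(2) c a closed_sequentially by blast
  ultimately show ?thesis using d_le by force
qed

lemma proj_nearest:
  fixes C :: "'a::{real_inner,complete_space} set"
  assumes "C \<noteq> {}" and "closed C" and "convex C"
  shows "proj C u \<in> C \<and> (\<forall>b\<in>C. dist u (proj C u) \<le> dist u b)"
  unfolding proj_def
proof (rule theI')
  obtain a where a: "a \<in> C" "\<forall>b\<in>C. dist u a \<le> dist u b"
    using nearest_point_exists[OF assms] by blast
  have "a' = a" if a': "a' \<in> C" "\<forall>b\<in>C. dist u a' \<le> dist u b" for a'
  proof -
    have "inner (u - a) (a' - a) \<le> 0" "inner (u - a') (a - a') \<le> 0"
      using nearest_point_inner_le assms(3) a a' by blast+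
    then have "inner (a' - a) (a' - a) \<le> 0"
      by (simp add: inner_commute algebra_simps)
    then have "a' - a = 0" using inner_gt_zero_iff[of "a' - a"] by linarith
    then show ?thesis by simp
  qed
  with a show "\<exists>!a. a \<in> C \<and> (\<forall>b\<in>C. dist u a \<le> dist u b)" by blast
qed

lemma proj_in:
  fixes C :: "'a::{real_inner,complete_space} set"
  assumes "C \<noteq> {}" and "closed C" and "convex C"
  shows "proj C u \<in> C"
  using proj_nearest[OF assms] by blast

lemma proj_inner_le:
  fixes C :: "'a::{real_inner,complete_space} set"
  assumes "C \<noteq> {}" and "closed C" and "convex C" and "c \<in> C"
  shows "inner (u - proj C u) (c - proj C u) \<le> 0"
  using proj_nearest[OF assms(1-3)] nearest_point_inner_le[OF assms(3) _ assms(4)] by blast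

text \<open>Uniform boundedness for the functionals \<open>\<langle>w n, -\<rangle>\<close>: by Baire category some \<open>F k\<close>
  contains a ball, and differences of points of that ball bound \<open>norm (w n)\<close>.\<close>

lemma bounded_if_inner_bounded:
  fixes w :: "nat \<Rightarrow> 'a::{real_inner,complete_space}"
  assumes "\<And>v. \<exists>K. \<forall>n. \<bar>inner (w n) v\<bar> \<le> K"
  shows "\<exists>M. \<forall>n. norm (w n) \<le> M"
proof -
  define F where "F k = {v. \<forall>n. \<bar>inner (w n) v\<bar> \<le> real k}" for k :: nat
  have closed_F: "closed (F k)" for k
    unfolding F_def Collect_all_eq by (intro closed_INT ballI closed_Collect_le continuous_intros)
  have "\<exists>k. v \<in> F k" for v
  proof -
    obtain K where "\<forall>n. \<bar>inner (w n) v\<bar> \<le> K" using assms by blast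
    then have "v \<in> F (nat \<lceil>K\<rceil>)" using order_trans[OF _ real_nat_ceiling_ge] by (simp add: F_def)
    then show ?thesis ..
  qed
  then have "\<Union>(range F) = UNIV" by blast
  then obtain k where "interior (F k) \<noteq> {}"
    using Baire_category_alt[of euclidean "range F"] completely_metrizable_space_euclidean closed_F
    by force
  then obtain v0 where "v0 \<in> interior (F k)" by blast
  then obtain r where r: "0 < r" and "ball v0 r \<subseteq> interior (F k)"
    using open_contains_ball open_interior by blast
  then have ball_F: "ball v0 r \<subseteq> F k" using interior_subset by blast
  have "norm (w n) \<le> 4 * real k / r" for n
  proof -
    have "v0 \<in> F k" "v0 + (r / 2) *\<^sub>R sgn (w n) \<in> F k"
      using ball_F r by (auto simp: dist_norm norm_sgn)
    then have "\<bar>inner (w n) (v0 + (r / 2) *\<^sub>R sgn (w n))\<bar> \<le> real k"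
      "\<bar>inner (w n) v0\<bar> \<le> real k"
      unfolding F_def by blast+
    moreover have "inner (w n) (sgn (w n)) = norm (w n)"
      by (cases "w n = 0") (simp_all add: sgn_div_norm power2_norm_eq_inner[symmetric] power2_eq_square)
    ultimately have "r / 2 * norm (w n) \<le> 2 * real k" by (simp add: inner_add_right)
    then show ?thesis using r by (simp add: field_simps)
  qed
  then show ?thesis by blast
qed

lemma weakly_converges_bounded:
  fixes w :: "nat \<Rightarrow> 'a::{real_inner,complete_space}"
  assumes "weakly_converges w z"
  shows "\<exists>M. \<forall>n. norm (w n) \<le> M"
proof (rule bounded_if_inner_bounded)
  fix v
  have "Bseq (\<lambda>n. inner (w n) v)"
    using assms convergent_imp_Bseq unfolding weakly_converges_def convergent_def by blast
  then show "\<exists>K. \<forall>n. \<bar>inner (w n) v\<bar> \<le> K" by (auto simp: Bseq_def)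
qed

lemma weakly_converges_diff_tendsto_zero:
  assumes "weakly_converges w z" and "(\<lambda>n. w n - y n) \<longlonglongrightarrow> 0"
  shows "weakly_converges y z"
  unfolding weakly_converges_def
proof
  fix v
  have "(\<lambda>n. inner (w n) v) \<longlonglongrightarrow> inner z v" using assms(1) by (simp add: weakly_converges_def)
  moreover have "(\<lambda>n. inner (w n - y n) v) \<longlonglongrightarrow> inner 0 v"
    by (intro tendsto_inner assms(2) tendsto_const)
  ultimately have "(\<lambda>n. inner (w n) v - inner (w n - y n) v) \<longlonglongrightarrow> inner z v - inner 0 v"
    by (rule tendsto_diff)
  then show "(\<lambda>n. inner (y n) v) \<longlonglongrightarrow> inner z v" by (simp add: inner_diff_left)
qed

lemma weakly_converges_closed_convex_mem:
  fixes C :: "'a::{real_inner,complete_space} set"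
  assumes "C \<noteq> {}" and "closed C" and "convex C"
    and "weakly_converges y z" and "eventually (\<lambda>n. y n \<in> C) sequentially"
  shows "z \<in> C"
proof -
  define q where "q = proj C z"
  have "(\<lambda>n. inner (y n - q) (z - q)) \<longlonglongrightarrow> inner (z - q) (z - q)"
    using assms(4) unfolding weakly_converges_def inner_diff_left by (intro tendsto_diff) auto
  moreover have "eventually (\<lambda>n. inner (y n - q) (z - q) \<le> 0) sequentially"
    using assms(5) proof eventually_elim
    case (elim n)
    show ?case using proj_inner_le[OF assms(1-3) elim, of z] by (simp add: q_def inner_commute)
  qed
  ultimately have "inner (z - q) (z - q) \<le> 0" by (rule tendsto_upperbound) simp
  then have "z - q = 0" using inner_gt_zero_iff[of "z - q"] by linarith
  moreover have "q \<in> C" unfolding q_def by (rule proj_in[OF assms(1-3)])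
  ultimately show ?thesis by simp
qed

lemma minty_imp_VI_sol:
  fixes A :: "'a::real_inner \<Rightarrow> 'a"
  assumes "convex C" and "continuous_on C A" and "z \<in> C"
    and minty: "\<And>x. x \<in> C \<Longrightarrow> 0 \<le> inner (A x) (x - z)"
  shows "z \<in> VI_sol A C"
  unfolding VI_sol_def
proof (intro CollectI conjI ballI \<open>z \<in> C\<close>)
  fix c assume "c \<in> C"
  define t where "t k = inverse (real (Suc k))" for k
  define x where "x k = z + t k *\<^sub>R (c - z)" for k
  have t: "0 < t k" "t k \<le> 1" for k by (simp_all add: t_def inverse_le_1_iff)
  have x_C: "x k \<in> C" for k
  proof -
    have "(1 - t k) *\<^sub>R z + t k *\<^sub>R c \<in> C"
      using assms(1,3) \<open>c \<in> C\<close> t[of k] by (simp add: convex_def)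
    then show ?thesis by (simp add: x_def algebra_simps)
  qed
  have "0 \<le> inner (A (x k)) (c - z)" for k
    using minty[OF x_C, of k] t[of k] by (simp add: x_def zero_le_mult_iff)
  moreover have "(\<lambda>k. inner (A (x k)) (c - z)) \<longlonglongrightarrow> inner (A z) (c - z)"
  proof -
    have "x \<longlonglongrightarrow> z + 0 *\<^sub>R (c - z)"
      unfolding x_def t_def by (intro tendsto_intros LIMSEQ_inverse_real_of_nat)
    then have "(\<lambda>k. A (x k)) \<longlonglongrightarrow> A z"
      by (intro continuous_on_tendsto_compose[OF assms(2) _ \<open>z \<in> C\<close>]) (simp_all add: x_C)
    then show ?thesis by (intro tendsto_intros)
  qed
  ultimately show "0 \<le> inner (A z) (c - z)" by (intro LIMSEQ_le_const) auto
qed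

lemma pseudomonotone_perturbation_bound:
  fixes A :: "'a::real_inner \<Rightarrow> 'a"
  assumes "pseudomonotone A" and "L-lipschitz_on UNIV A"
    and "0 < c" and "c < norm (A u)" and "0 < \<epsilon>" and "\<epsilon> \<le> 1"
    and "- \<epsilon> \<le> inner (A u) (x - u)"
  shows "- (\<epsilon> / c) * (L * (norm (x - u) + 1 / c) + norm (A x)) \<le> inner (A x) (x - u)"
proof -
  have L: "0 \<le> L" using assms(2) by (rule lipschitz_on_nonneg)
  \<comment> \<open>The shift \<open>v\<close> along \<open>A u\<close> makes \<open>\<langle>A u, x + v - u\<rangle> \<ge> 0\<close>, so pseudomonotonicity applies at
      \<open>x + v\<close>; Lipschitz continuity bounds the cost of moving back from \<open>x + v\<close> to \<open>x\<close>.\<close>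
  define v where "v = (\<epsilon> / (norm (A u))^2) *\<^sub>R A u"
  have Au_pos: "0 < norm (A u)" using assms(3,4) by linarith
  have "inner (A u) v = \<epsilon>"
    using Au_pos by (simp add: v_def power2_norm_eq_inner)
  with assms(7) have "0 \<le> inner (A u) ((x + v) - u)" by (simp add: inner_diff_right inner_add_right)
  then have pm: "0 \<le> inner (A (x + v)) ((x + v) - u)"
    using assms(1) unfolding pseudomonotone_def by blast
  have "norm v = \<epsilon> / norm (A u)" using Au_pos assms(5) by (simp add: v_def power2_eq_square)
  also have "\<dots> \<le> \<epsilon> / c" using assms(3-5) Au_pos by (intro divide_left_mono) auto
  finally have v_le: "norm v \<le> \<epsilon> / c" .
  then have v_le_1: "norm v \<le> 1 / c" using assms(3,6) by (smt (verit) divide_right_mono)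
  have "\<bar>inner (A (x + v) - A x) ((x + v) - u)\<bar> \<le> norm (A (x + v) - A x) * norm ((x + v) - u)"
    by (rule Cauchy_Schwarz_ineq2)
  also have "\<dots> \<le> (L * (\<epsilon> / c)) * (norm (x - u) + 1 / c)"
  proof (rule mult_mono)
    have "norm (A (x + v) - A x) \<le> L * norm v"
      using lipschitz_on_normD[OF assms(2)] by (metis UNIV_I add_diff_cancel_left')
    then show "norm (A (x + v) - A x) \<le> L * (\<epsilon> / c)"
      using v_le L by (meson mult_left_mono order_trans)
    have "norm ((x + v) - u) \<le> norm (x - u) + norm v"
      using norm_triangle_ineq[of "x - u" v] by (simp add: diff_add_eq)
    then show "norm ((x + v) - u) \<le> norm (x - u) + 1 / c" using v_le_1 by linarith
  qed (use L assms(3,5) in auto)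
  finally have lip_term:
    "\<bar>inner (A (x + v) - A x) ((x + v) - u)\<bar> \<le> (L * (\<epsilon> / c)) * (norm (x - u) + 1 / c)" .
  have "\<bar>inner (A x) v\<bar> \<le> norm (A x) * (\<epsilon> / c)"
    using Cauchy_Schwarz_ineq2[of "A x" v] mult_left_mono[OF v_le norm_ge_zero[of "A x"]] by linarith
  moreover have "inner (A x) (x - u)
      = inner (A (x + v)) ((x + v) - u) - inner (A (x + v) - A x) ((x + v) - u) - inner (A x) v"
    by (simp add: algebra_simps)
  moreover have "- (\<epsilon> / c) * (L * (norm (x - u) + 1 / c) + norm (A x))
      = - ((L * (\<epsilon> / c)) * (norm (x - u) + 1 / c)) - norm (A x) * (\<epsilon> / c)"
    by (simp add: algebra_simps)
  ultimately show ?thesis using pm lip_term by linarith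
qed

lemma nonneg_if_ge_neg_eps_mult:
  fixes a K :: real
  assumes "\<And>\<epsilon>. 0 < \<epsilon> \<Longrightarrow> \<epsilon> \<le> 1 \<Longrightarrow> - \<epsilon> * K \<le> a"
  shows "0 \<le> a"
proof -
  have "(\<lambda>k. - inverse (real (Suc k)) * K) \<longlonglongrightarrow> - 0 * K"
    by (intro tendsto_intros LIMSEQ_inverse_real_of_nat)
  moreover have "\<forall>k. - inverse (real (Suc k)) * K \<le> a"
    using assms by (simp add: inverse_le_1_iff)
  ultimately have "- 0 * K \<le> a" by (intro LIMSEQ_le_const2) blast+
  then show ?thesis by simp
qed

lemma pseudomonotone_weak_limit_minty:
  fixes A :: "'a::real_inner \<Rightarrow> 'a"
  assumes "pseudomonotone A" and "L-lipschitz_on UNIV A"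
    and "weakly_converges w z" and "\<And>n. norm (w n) \<le> M"
    and "0 < c" and "eventually (\<lambda>n. c < norm (A (w n))) sequentially"
    and "\<And>\<epsilon>. 0 < \<epsilon> \<Longrightarrow>
      eventually (\<lambda>n. - \<epsilon> \<le> inner (A (w n)) (x - w n)) sequentially"
  shows "0 \<le> inner (A x) (x - z)"
proof (rule nonneg_if_ge_neg_eps_mult)
  have L: "0 \<le> L" using assms(2) by (rule lipschitz_on_nonneg)
  have "(\<lambda>n. inner (w n) (A x)) \<longlonglongrightarrow> inner z (A x)"
    using assms(3) by (simp add: weakly_converges_def)
  then have "(\<lambda>n. inner (A x) x - inner (w n) (A x)) \<longlonglongrightarrow> inner (A x) x - inner z (A x)"
    by (intro tendsto_diff tendsto_const)
  then have lim: "(\<lambda>n. inner (A x) (x - w n)) \<longlonglongrightarrow> inner (A x) (x - z)"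
    by (simp add: inner_diff_right inner_commute)
  fix \<epsilon> :: real assume "0 < \<epsilon>" "\<epsilon> \<le> 1"
  define K where "K = (L * (norm x + M + 1 / c) + norm (A x)) / c"
  show "- \<epsilon> * K \<le> inner (A x) (x - z)"
  proof (rule tendsto_lowerbound[OF lim _ trivial_limit_sequentially])
    show "eventually (\<lambda>n. - \<epsilon> * K \<le> inner (A x) (x - w n)) sequentially"
      using assms(6) assms(7)[OF \<open>0 < \<epsilon>\<close>]
    proof eventually_elim
      case (elim n)
      have "norm (x - w n) \<le> norm x + M"
        using norm_triangle_ineq4[of x "w n"] assms(4)[of n] by linarith
      then have "(L * (norm (x - w n) + 1 / c) + norm (A x)) / c \<le> K"
        using L assms(5) by (simp add: K_def divide_right_mono mult_left_mono)
      then have "- \<epsilon> * K \<le> - (\<epsilon> / c) * (L * (norm (x - w n) + 1 / c) + norm (A x))"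
        using mult_left_mono[of _ K \<epsilon>] \<open>0 < \<epsilon>\<close> by fastforce
      also have "\<dots> \<le> inner (A x) (x - w n)"
        by (rule pseudomonotone_perturbation_bound[OF assms(1,2,5) elim(1) \<open>0 < \<epsilon>\<close> \<open>\<epsilon> \<le> 1\<close> elim(2)])
      finally show ?case .
    qed
  qed
qed

lemma proj_step_inner_lower:
  fixes C :: "'a::{real_inner,complete_space} set" and w g :: 'a
  assumes "C \<noteq> {}" and "closed C" and "convex C" and "x \<in> C" and "0 < l"
  defines "y \<equiv> proj C (w - l *\<^sub>R g)"
  shows "- norm (w - y) * (norm (x - y) / l + norm g) \<le> inner g (x - w)"
proof -
  have "inner ((w - l *\<^sub>R g) - y) (x - y) \<le> 0"
    unfolding y_def using proj_inner_le[OF assms(1-4)] .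
  then have "inner (w - y) (x - y) \<le> l * inner g (x - y)"
    by (simp add: algebra_simps)
  moreover have "- (norm (w - y) * norm (x - y)) \<le> inner (w - y) (x - y)"
    using Cauchy_Schwarz_ineq2[of "w - y" "x - y"] by linarith
  ultimately have "- (norm (w - y) * norm (x - y)) \<le> inner g (x - y) * l"
    by (simp add: mult.commute)
  then have "- (norm (w - y) * norm (x - y)) / l \<le> inner g (x - y)"
    by (subst pos_divide_le_eq[OF assms(5)])
  moreover have "- (norm g * norm (w - y)) \<le> inner g (y - w)"
    using Cauchy_Schwarz_ineq2[of g "y - w"] by (simp add: norm_minus_commute)
  moreover have "inner g (x - w) = inner g (x - y) + inner g (y - w)"
    by (simp add: inner_diff_right)
  ultimately show ?thesis by (simp add: algebra_simps)
qed

lemma proj_steps_inner_eventually_ge: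
  fixes C :: "'a::{real_inner,complete_space} set"
  assumes C: "C \<noteq> {}" "closed C" "convex C" and "x \<in> C"
    and w_bounded: "\<And>n. norm (w n) \<le> M" and g_bounded: "\<And>n. norm (g n) \<le> G"
    and "0 < l0" and l_ge: "eventually (\<lambda>n. l0 \<le> l n) sequentially"
    and y_eq: "eventually (\<lambda>n. y n = proj C (w n - l n *\<^sub>R g n)) sequentially"
    and residual: "(\<lambda>n. w n - y n) \<longlonglongrightarrow> 0"
    and "0 < \<epsilon>"
  shows "eventually (\<lambda>n. - \<epsilon> \<le> inner (g n) (x - w n)) sequentially"
proof -
  define B where "B n = norm (x - y n) / l n + norm (g n)" for n
  have "(\<lambda>n. norm (w n - y n) * B n) \<longlonglongrightarrow> 0"
  proof (rule tendsto_0_le[OF residual])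
    have "(\<lambda>n. norm (w n - y n)) \<longlonglongrightarrow> 0" using residual by (simp add: tendsto_norm_zero_iff)
    then have "eventually (\<lambda>n. norm (w n - y n) < 1) sequentially"
      by (rule order_tendstoD(2)) simp
    with l_ge show "eventually (\<lambda>n. norm (norm (w n - y n) * B n)
        \<le> norm (w n - y n) * ((norm x + M + 1) / l0 + G)) sequentially"
    proof eventually_elim
      case (elim n)
      have y_le: "norm (x - y n) \<le> norm x + M + 1"
        using norm_triangle_ineq4[of x "y n"] norm_triangle_ineq3[of "w n" "y n"] w_bounded[of n] elim(2)
        by linarith
      moreover have "0 \<le> norm x + M + 1" using y_le norm_ge_zero[of "x - y n"] by linarith
      ultimately have "norm (x - y n) / l n \<le> (norm x + M + 1) / l0"
        using elim(1) \<open>0 < l0\<close> by (intro frac_le) auto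
      then have "0 \<le> B n" "B n \<le> (norm x + M + 1) / l0 + G"
        using g_bounded[of n] elim(1) \<open>0 < l0\<close> by (auto simp: B_def)
      then show ?case by (simp add: mult_left_mono)
    qed
  qed
  then have "eventually (\<lambda>n. norm (w n - y n) * B n < \<epsilon>) sequentially"
    using \<open>0 < \<epsilon>\<close> by (rule order_tendstoD(2))
  with l_ge y_eq show ?thesis
  proof eventually_elim
    case (elim n)
    then show ?case
      using proj_step_inner_lower[OF C \<open>x \<in> C\<close>, of "l n" "w n" "g n"] \<open>0 < l0\<close>
      by (simp add: B_def)
  qed
qed

lemma eventually_gt_if_le_liminf:
  assumes "ereal a \<le> liminf (\<lambda>n. ereal (f n))" and "b < a"
  shows "eventually (\<lambda>n. b < f n) sequentially"
proof -
  have "ereal b < ereal a" using assms(2) by simp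
  also note assms(1)
  finally have "ereal b < liminf (\<lambda>n. ereal (f n))" .
  then show ?thesis by (auto dest: less_LiminfD)
qed

lemma stepsize_lower_bound:
  fixes A :: "'a::real_normed_vector \<Rightarrow> 'a"
  assumes "L-lipschitz_on UNIV A" and "0 \<le> mu" and "\<And>n. 0 \<le> mus n" and "\<And>n. 0 \<le> p n"
    and step: "\<And>n. n \<ge> 1 \<Longrightarrow> lam (Suc n) =
        (if A (w n) \<noteq> A (y n)
         then min ((mus n + mu) * norm (w n - y n) / norm (A (w n) - A (y n))) (lam n + p n)
         else lam n + p n)"
    and "n \<ge> 1"
  shows "min (lam 1) (mu / (L + 1)) \<le> lam n"
  using \<open>n \<ge> 1\<close>
proof (induction n rule: dec_induct)
  case base
  show ?case by simp
next
  case (step n)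
  have "min (lam 1) (mu / (L + 1)) \<le> (mus n + mu) * norm (w n - y n) / norm (A (w n) - A (y n))"
    if "A (w n) \<noteq> A (y n)"
  proof -
    have L: "0 \<le> L" using assms(1) by (rule lipschitz_on_nonneg)
    have "norm (A (w n) - A (y n)) \<le> L * norm (w n - y n)"
      using lipschitz_on_normD[OF assms(1)] by simp
    also have "\<dots> \<le> (L + 1) * norm (w n - y n)" by (simp add: algebra_simps)
    finally have "mu * norm (A (w n) - A (y n)) \<le> (mus n + mu) * ((L + 1) * norm (w n - y n))"
      using assms(2,3) by (intro mult_mono) auto
    then have "mu / (L + 1) \<le> (mus n + mu) * norm (w n - y n) / norm (A (w n) - A (y n))"
      using that L by (simp add: field_simps)
    then show ?thesis by linarith
  qed
  then show ?case
    using step.IH assms(4)[of n] by (simp add: step.hyps(1) assms(5)[OF step.hyps(1)])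
qed

theorem proposition3p2:
  fixes A :: "'a::{real_inner, complete_space} \<Rightarrow> 'a"
    and C :: "'a set"
    and x w zz y :: "nat \<Rightarrow> 'a"
    and lam alpha beta theta mus p :: "nat \<Rightarrow> real"
    and mu lam1 L :: real
    and zs :: 'a
  assumes C_ne: "C \<noteq> {}" and C_closed: "closed C" and C_convex: "convex C"
    and S_ne: "VI_sol A C \<noteq> {}"
    and A_pm: "pseudomonotone A"
    and A_lip: "L-lipschitz_on UNIV A"
    and A_wlsc: "\<And>u v. weakly_converges u v \<Longrightarrow>
                   ereal (norm (A v)) \<le> liminf (\<lambda>n. ereal (norm (A (u n))))"
    and mu_rng: "0 < mu" "mu < 1"
    and lam1_pos: "lam1 > 0"
    and mus_nonneg: "\<And>n. mus n \<ge> 0"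
    and p_nonneg: "\<And>n. p n \<ge> 0"
    and p_sum: "summable p"
    and lam_1: "lam 1 = lam1"
    and w_def: "\<And>n. n \<ge> 1 \<Longrightarrow> w n = x n + alpha n *\<^sub>R (x n - x (n - 1))"
    and z_def: "\<And>n. n \<ge> 1 \<Longrightarrow> zz n = x n + beta n *\<^sub>R (x n - x (n - 1))"
    and y_def: "\<And>n. n \<ge> 1 \<Longrightarrow> y n = proj C (w n - lam n *\<^sub>R A (w n))"
    and lam_step: "\<And>n. n \<ge> 1 \<Longrightarrow> lam (Suc n) =
        (if A (w n) \<noteq> A (y n)
         then min ((mus n + mu) * norm (w n - y n) / norm (A (w n) - A (y n))) (lam n + p n)
         else lam n + p n)"
    and no_stop: "\<And>n. n \<ge> 1 \<Longrightarrow> w n \<noteq> y n"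
    and x_step: "\<And>n. n \<ge> 1 \<Longrightarrow> x (Suc n) =
        (1 - theta n) *\<^sub>R zz n + theta n *\<^sub>R (y n - lam n *\<^sub>R (A (y n) - A (w n)))"
    and wy_lim: "(\<lambda>n. norm (w n - y n)) \<longlonglongrightarrow> 0"
    and w_weak: "weakly_converges w zs"
  shows "zs \<in> VI_sol A C"
proof -
  define l0 where "l0 = min lam1 (mu / (L + 1))"
  have "0 < l0" using lam1_pos mu_rng lipschitz_on_nonneg[OF A_lip] by (simp add: l0_def)
  have lam_ge: "eventually (\<lambda>n. l0 \<le> lam n) sequentially"
    unfolding eventually_sequentially l0_def lam_1[symmetric]
    using stepsize_lower_bound[where w=w and y=y and lam=lam, OF A_lip _ mus_nonneg p_nonneg lam_step]
      mu_rng by (intro exI[of _ 1]) simp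
  obtain M where M: "\<And>n. norm (w n) \<le> M" using weakly_converges_bounded[OF w_weak] by blast
  have A_w_bounded: "norm (A (w n)) \<le> norm (A 0) + L * M" for n
    using lipschitz_on_normD[OF A_lip, of "w n" 0] mult_left_mono[OF M[of n] lipschitz_on_nonneg[OF A_lip]]
      norm_triangle_ineq2[of "A (w n)" "A 0"] by simp
  have y_eq: "eventually (\<lambda>n. y n = proj C (w n - lam n *\<^sub>R A (w n))) sequentially"
    using eventually_ge_at_top[of 1] by eventually_elim (rule y_def)
  have residual: "(\<lambda>n. w n - y n) \<longlonglongrightarrow> 0" using wy_lim by (simp add: tendsto_norm_zero_iff)
  have "eventually (\<lambda>n. y n \<in> C) sequentially"
    using y_eq by eventually_elim (simp add: proj_in[OF C_ne C_closed C_convex])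
  with weakly_converges_diff_tendsto_zero[OF w_weak residual] have "zs \<in> C"
    by (rule weakly_converges_closed_convex_mem[OF C_ne C_closed C_convex])
  show ?thesis
  proof (cases "A zs = 0")
    case True
    with \<open>zs \<in> C\<close> show ?thesis by (simp add: VI_sol_def)
  next
    case False
    define c where "c = norm (A zs) / 2"
    have "0 < c" using False by (simp add: c_def)
    have A_w_large: "eventually (\<lambda>n. c < norm (A (w n))) sequentially"
      using False by (intro eventually_gt_if_le_liminf[OF A_wlsc[OF w_weak]]) (simp add: c_def)
    have "0 \<le> inner (A x) (x - zs)" if "x \<in> C" for x
      by (rule pseudomonotone_weak_limit_minty[OF A_pm A_lip w_weak M \<open>0 < c\<close> A_w_large])
        (rule proj_steps_inner_eventually_ge[where g="\<lambda>n. A (w n)", OF C_ne C_closed C_convex that M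
          A_w_bounded \<open>0 < l0\<close> lam_ge y_eq residual])
    then show ?thesis
      using minty_imp_VI_sol[OF C_convex _ \<open>zs \<in> C\<close>] lipschitz_on_continuous_on[OF A_lip]
        continuous_on_subset by blast
  qed
qed

end
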